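(* Let $d$ be a positive square-free integer with $d\equiv 7\pmod 8$, $K=\mathbb{Q}[\sqrt{-d}]$ with ring of integers $\mathfrak{o}_K$, and $\mathcal{Q}=\mathbb{Q}[\sqrt{d}]$ with ring of integers $\mathfrak{o}_{\mathcal{Q}}=\mathbb{Z}[\sqrt{d}]$. (1) Let $\xi\neq\psi$ be elements of $\{1,i,j,k\}$, $p,m\in\mathbb{Z}$, and let $u=m\sqrt{-d}\,\xi+p\psi\in\mathbb{H}(\mathfrak{o}_K)$ have norm $N(u)=1$. If $1\notin\operatorname{supp}(u)$, then $u$ is a torsion unit. (2) For a unit $\epsilon=p+m\sqrt{d}$ ($p,m\in\mathbb{Z}$) of $\mathfrak{o}_{\mathcal{Q}}$ and $\psi\in\{i,j,k\}$, put $u_{(\epsilon,\psi)}=p+m\sqrt{-d}\,\psi\in\mathbb{H}(\mathfrak{o}_K)$. Then $u_{(\epsilon,\psi)}^n=u_{(\epsilon^n,\psi)}$ for all $\psi\in\{i,j,k\}$ and all $n\in\mathbb{Z}$.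
   Context: $\mathbb{H}(K)=\left(\frac{-1,-1}{K}\right)$ is the quaternion algebra over $K$ with $K$-basis $1,i,j,k$, $i^2=j^2=-1$, $k=ji=-ij$; $\mathbb{H}(\mathfrak{o}_K)$ is the set of $\mathfrak{o}_K$-linear combinations of $1,i,j,k$; the norm is $N(x_1+x_ii+x_jj+x_kk)=x_1^2+x_i^2+x_j^2+x_k^2$. The support $\operatorname{supp}(u)$ of $u$ is the set of basis elements among $1,i,j,k$ whose coefficient in $u$ is nonzero. *)

theory Defs
  imports Complex_Main "HOL-Computational_Algebra.Squarefree"
begin

text \<open>Quaternions (-1,-1 / F) with coefficients in a commutative ring, basis 1,i,j,k,
  i^2 = j^2 = -1, k = j i = - i j.  Components: q1 (coefficient of 1), qi, qj, qk.\<close>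

datatype 'a quat = Quat (q1: 'a) (qi: 'a) (qj: 'a) (qk: 'a)

instantiation quat :: (comm_ring_1) "{one, times}"
begin
definition one_quat :: "'a quat" where "one_quat = Quat 1 0 0 0"
definition times_quat :: "'a quat \<Rightarrow> 'a quat \<Rightarrow> 'a quat" where
  "times_quat x y = Quat
     (q1 x * q1 y - qi x * qi y - qj x * qj y - qk x * qk y)
     (q1 x * qi y + qi x * q1 y - qj x * qk y + qk x * qj y)
     (q1 x * qj y + qj x * q1 y + qi x * qk y - qk x * qi y)
     (q1 x * qk y + qk x * q1 y + qj x * qi y - qi x * qj y)"
instance ..
end

instance quat :: (comm_ring_1) power ..

definition qI :: "'a::comm_ring_1 quat" where "qI = Quat 0 1 0 0"
definition qJ :: "'a::comm_ring_1 quat" where "qJ = Quat 0 0 1 0"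
definition qK :: "'a::comm_ring_1 quat" where "qK = Quat 0 0 0 1"

definition qbasis :: "'a::comm_ring_1 quat set" where "qbasis = {1, qI, qJ, qK}"

definition qscale :: "'a::comm_ring_1 \<Rightarrow> 'a quat \<Rightarrow> 'a quat" where
  "qscale c x = Quat (c * q1 x) (c * qi x) (c * qj x) (c * qk x)"

definition qadd :: "'a::comm_ring_1 quat \<Rightarrow> 'a quat \<Rightarrow> 'a quat" where
  "qadd x y = Quat (q1 x + q1 y) (qi x + qi y) (qj x + qj y) (qk x + qk y)"

definition qnorm :: "'a::comm_ring_1 quat \<Rightarrow> 'a" where
  "qnorm x = (q1 x)^2 + (qi x)^2 + (qj x)^2 + (qk x)^2"

definition qconj :: "'a::comm_ring_1 quat \<Rightarrow> 'a quat" where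
  "qconj x = Quat (q1 x) (- qi x) (- qj x) (- qk x)"

definition qinv :: "'a::field quat \<Rightarrow> 'a quat" where
  "qinv x = qscale (inverse (qnorm x)) (qconj x)"

definition qpowi :: "'a::field quat \<Rightarrow> int \<Rightarrow> 'a quat" where
  "qpowi x n = (if 0 \<le> n then x ^ nat n else (qinv x) ^ nat (- n))"

text \<open>K = Q(sqrt(-d)) is realised inside the complex numbers, sqrt(-d) = i * sqrt d.\<close>
definition sqrt_neg :: "int \<Rightarrow> complex" where
  "sqrt_neg d = \<i> * complex_of_real (sqrt (real_of_int d))"

text \<open>Ring of integers of Q(sqrt(-d)) for d = 3 mod 4: Z[(1 + sqrt(-d))/2].\<close>
definition oK :: "int \<Rightarrow> complex set" where
  "oK d = {of_int a + of_int b * (1 + sqrt_neg d) / 2 | a b. True}"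

definition HoK :: "int \<Rightarrow> complex quat set" where
  "HoK d = {x. q1 x \<in> oK d \<and> qi x \<in> oK d \<and> qj x \<in> oK d \<and> qk x \<in> oK d}"

definition torsion_unit :: "int \<Rightarrow> complex quat \<Rightarrow> bool" where
  "torsion_unit d u \<longleftrightarrow> u \<in> HoK d \<and> (\<exists>v\<in>HoK d. u * v = 1 \<and> v * u = 1)
     \<and> (\<exists>n::nat. n > 0 \<and> u ^ n = 1)"

text \<open>Ring of integers of Q(sqrt d), d = 3 mod 4: Z[sqrt d], inside the reals.\<close>
definition oQ :: "int \<Rightarrow> real set" where
  "oQ d = {of_int a + of_int b * sqrt (real_of_int d) | a b. True}"

definition oQ_unit :: "int \<Rightarrow> real \<Rightarrow> bool" where
  "oQ_unit d e \<longleftrightarrow> e \<in> oQ d \<and> (\<exists>f\<in>oQ d. e * f = 1)"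

text \<open>u_(eps,psi) = p + m sqrt(-d) psi for eps = p + m sqrt d\<close>
definition u_eps :: "int \<Rightarrow> int \<Rightarrow> int \<Rightarrow> complex quat \<Rightarrow> complex quat" where
  "u_eps d p m \<psi> = qadd (qscale (of_int p) 1) (qscale (of_int m * sqrt_neg d) \<psi>)"

end

theory Submission
  imports Defs "HOL-Computational_Algebra.Nth_Powers"
begin

text \<open>
  (1) A quaternion u with zero real part satisfies u * u = -N(u) and u * conj u = N(u), so
  for N(u) = 1 it is a unit of order dividing 4, with inverse conj u again in H(o_K).

  (2) Since psi * psi = -1, the element sqrt(-d) psi squares to d, so
  p + m sqrt d \<mapsto> p + m sqrt(-d) psi is multiplicative on Z[sqrt d]; this gives the claim
  for n \<ge> 0.  For n < 0 one needs that units of Z[sqrt d] have norm p^2 - d m^2 = \<plusminus>1,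
  which holds because d = 3 (mod 4) is not a square, so sqrt d is irrational; both inverses
  are then the conjugate times the norm.
\<close>

lemma times_qconj: "x * qconj x = Quat (qnorm x) 0 0 0"
  by (simp add: times_quat_def qconj_def qnorm_def power2_eq_square algebra_simps)

lemma qconj_times: "qconj x * x = Quat (qnorm x) 0 0 0"
  by (simp add: times_quat_def qconj_def qnorm_def power2_eq_square algebra_simps)

lemma pure_quat_square: "q1 u = 0 \<Longrightarrow> u * u = Quat (- qnorm u) 0 0 0"
  by (simp add: times_quat_def qnorm_def power2_eq_square algebra_simps)

lemma pure_quat_power_4:
  assumes "q1 u = 0" "qnorm u = 1"
  shows "u ^ 4 = 1"
proof -
  have "u * 1 = u"
    by (simp add: times_quat_def one_quat_def)
  moreover have "u * Quat (-1) 0 0 0 = qconj u"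
    using assms(1) by (simp add: times_quat_def qconj_def)
  ultimately have "u ^ 4 = u * qconj u"
    using pure_quat_square[OF assms(1)] assms(2) by (simp add: eval_nat_numeral)
  then show ?thesis
    using assms(2) by (simp add: times_qconj one_quat_def)
qed

lemma oK_uminus: "x \<in> oK d \<Longrightarrow> - x \<in> oK d"
proof -
  assume "x \<in> oK d"
  then obtain a b where "x = of_int a + of_int b * (1 + sqrt_neg d) / 2"
    unfolding oK_def by blast
  then have "- x = of_int (- a) + of_int (- b) * (1 + sqrt_neg d) / 2"
    by simp
  then show ?thesis
    unfolding oK_def by blast
qed

lemma of_int_plus_sqrt_neg_in_oK: "of_int a + of_int b * sqrt_neg d \<in> oK d"
proof -
  have "of_int a + of_int b * sqrt_neg d = of_int (a - b) + of_int (2 * b) * (1 + sqrt_neg d) / 2"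
    by (simp add: field_simps)
  then show ?thesis
    unfolding oK_def by blast
qed

lemma HoK_qconj: "u \<in> HoK d \<Longrightarrow> qconj u \<in> HoK d"
  by (simp add: HoK_def qconj_def oK_uminus)

lemma qbasis_integral:
  "\<xi> \<in> qbasis \<Longrightarrow> \<exists>a b c e. (\<xi>::complex quat) = Quat (of_int a) (of_int b) (of_int c) (of_int e)"
  unfolding qbasis_def one_quat_def qI_def qJ_def qK_def by auto

lemma qbasis_combination_in_HoK:
  assumes "\<xi> \<in> qbasis" "\<psi> \<in> qbasis"
  shows "qadd (qscale (of_int m * sqrt_neg d) \<xi>) (qscale (of_int p) \<psi>) \<in> HoK d"
proof -
  have component: "of_int m * sqrt_neg d * of_int a + of_int p * of_int b \<in> oK d" for a b
    using of_int_plus_sqrt_neg_in_oK[of "p * b" "m * a" d] by (simp add: ac_simps)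
  obtain a b c e a' b' c' e' where
    "\<xi> = Quat (of_int a) (of_int b) (of_int c) (of_int e)"
    "\<psi> = Quat (of_int a') (of_int b') (of_int c') (of_int e')"
    using qbasis_integral[OF assms(1)] qbasis_integral[OF assms(2)] by blast
  then show ?thesis
    by (simp add: HoK_def qadd_def qscale_def component)
qed

lemma torsion_unit_if_pure_norm_1:
  assumes "u \<in> HoK d" "q1 u = 0" "qnorm u = 1"
  shows "torsion_unit d u"
  unfolding torsion_unit_def
proof (intro conjI bexI[of _ "qconj u"] exI[of _ 4])
  show "u * qconj u = 1" "qconj u * u = 1"
    using assms(3) by (simp_all add: times_qconj qconj_times one_quat_def)
qed (use assms HoK_qconj pure_quat_power_4 in auto)

abbreviation zsqrt :: "int \<Rightarrow> int \<Rightarrow> int \<Rightarrow> real" where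
  "zsqrt d p m \<equiv> of_int p + of_int m * sqrt (of_int d)"

lemma zsqrt_mult:
  assumes "d \<ge> 0"
  shows "zsqrt d a b * zsqrt d c e = zsqrt d (a * c + d * b * e) (a * e + b * c)"
proof -
  have "sqrt (of_int d) * sqrt (of_int d) = of_int d"
    using assms by simp
  then show ?thesis
    by (simp add: algebra_simps)
qed

lemma sqrt_neg_mult_self: "d \<ge> 0 \<Longrightarrow> sqrt_neg d * sqrt_neg d = - of_int d"
proof -
  assume "d \<ge> 0"
  then have "complex_of_real (sqrt (of_int d)) * complex_of_real (sqrt (of_int d)) = of_int d"
    by (simp flip: of_real_mult)
  then show ?thesis
    unfolding sqrt_neg_def by (simp add: algebra_simps)
qed

lemma u_eps_mult:
  assumes "d \<ge> 0" "\<psi> \<in> {qI, qJ, qK}"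
  shows "u_eps d a b \<psi> * u_eps d c e \<psi> = u_eps d (a * c + d * b * e) (a * e + b * c) \<psi>"
proof -
  have sq: "sqrt_neg d * (sqrt_neg d * x) = - of_int d * x" for x
    by (metis sqrt_neg_mult_self[OF assms(1)] mult.assoc)
  from assms(2) show ?thesis
    by (auto simp: u_eps_def qadd_def qscale_def times_quat_def one_quat_def qI_def qJ_def qK_def
        algebra_simps sq sqrt_neg_mult_self[OF assms(1)])
qed

lemma u_eps_1_0: "\<psi> \<in> {qI, qJ, qK} \<Longrightarrow> u_eps d 1 0 \<psi> = 1"
  by (auto simp: u_eps_def qadd_def qscale_def one_quat_def qI_def qJ_def qK_def)

lemma zsqrt_power_u_eps_power:
  assumes "d \<ge> 0" "\<psi> \<in> {qI, qJ, qK}"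
  shows "\<exists>x y. zsqrt d a b ^ n = zsqrt d x y \<and> u_eps d a b \<psi> ^ n = u_eps d x y \<psi>"
proof (induction n)
  case 0
  have "zsqrt d a b ^ 0 = zsqrt d 1 0" "u_eps d a b \<psi> ^ 0 = u_eps d 1 0 \<psi>"
    using u_eps_1_0[OF assms(2)] by simp_all
  then show ?case by blast
next
  case (Suc n)
  then obtain x y where "zsqrt d a b ^ n = zsqrt d x y" "u_eps d a b \<psi> ^ n = u_eps d x y \<psi>"
    by blast
  then have "zsqrt d a b ^ Suc n = zsqrt d (a * x + d * b * y) (a * y + b * x)"
    "u_eps d a b \<psi> ^ Suc n = u_eps d (a * x + d * b * y) (a * y + b * x) \<psi>"
    by (simp_all add: zsqrt_mult[OF assms(1)] u_eps_mult[OF assms])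
  then show ?case by blast
qed

lemma square_mod_4: "(y::int)\<^sup>2 mod 4 \<in> {0, 1}"
proof (cases "even y")
  case True
  then show ?thesis
    by (auto simp: power2_eq_square elim!: evenE)
next
  case False
  then obtain k where "y = 2 * k + 1"
    by (metis oddE)
  then have "y\<^sup>2 = 4 * (k\<^sup>2 + k) + 1"
    by (simp add: power2_eq_square algebra_simps)
  moreover have "(4 * t + 1) mod 4 = (1::int)" for t
    by presburger
  ultimately have "y\<^sup>2 mod 4 = 1"
    by metis
  then show ?thesis by simp
qed

lemma not_square_if_mod_4_eq_3:
  assumes "(d::int) mod 4 = 3"
  shows "\<not> is_square d"
proof
  assume "is_square d"
  then obtain y where "d = y\<^sup>2"
    by (auto elim: is_nth_powerE)
  then show False
    using assms square_mod_4[of y] by simp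
qed

lemma zsqrt_eq_1:
  assumes "\<not> is_square d" "d \<ge> 0" "zsqrt d y x = 1"
  shows "x = 0" "y = 1"
proof -
  have "of_int x * sqrt (of_int d) = (1 - of_int y :: real)"
    using assms(3) by (simp add: algebra_simps)
  then have "(of_int x * sqrt (of_int d))\<^sup>2 = (1 - of_int y :: real)\<^sup>2"
    by simp
  then have "real_of_int (d * x\<^sup>2) = real_of_int ((1 - y)\<^sup>2)"
    using assms(2) by (simp add: power_mult_distrib mult.commute)
  then have "d * x\<^sup>2 = (1 - y)\<^sup>2"
    by (simp only: of_int_eq_iff)
  then show "x = 0"
    using assms(1) is_nth_power_mult_cancel_right[of 2 "x\<^sup>2" d]
    by (metis is_nth_power_nth_power power_not_zero)
  then show "y = 1"
    using assms(3) by simp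
qed

text \<open>The norm p^2 - d m^2 is multiplicative, and only \<plusminus>1 divide 1.\<close>

lemma oQ_unit_norm:
  assumes "\<not> is_square d" "d \<ge> 0" "oQ_unit d (zsqrt d p m)"
  shows "\<bar>p\<^sup>2 - d * m\<^sup>2\<bar> = 1"
proof -
  obtain a b where "zsqrt d p m * zsqrt d a b = 1"
    using assms(3) unfolding oQ_unit_def oQ_def by blast
  then have "zsqrt d (p * a + d * m * b) (p * b + m * a) = 1"
    by (simp add: zsqrt_mult[OF assms(2)])
  note product = zsqrt_eq_1[OF assms(1,2) this]
  have "(p\<^sup>2 - d * m\<^sup>2) * (a\<^sup>2 - d * b\<^sup>2) = (p * a + d * m * b)\<^sup>2 - d * (p * b + m * a)\<^sup>2"
    by (simp add: power2_eq_square algebra_simps)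
  then have "(p\<^sup>2 - d * m\<^sup>2) * (a\<^sup>2 - d * b\<^sup>2) = 1"
    using product by simp
  then show ?thesis
    by (auto simp: zmult_eq_1_iff)
qed

lemma inverse_zsqrt:
  assumes "d \<ge> 0" "p\<^sup>2 - d * m\<^sup>2 = N" "\<bar>N\<bar> = 1"
  shows "inverse (zsqrt d p m) = zsqrt d (N * p) (- N * m)"
proof (rule inverse_unique)
  have "p * (N * p) + d * m * (- N * m) = N * N"
    by (simp add: power2_eq_square algebra_simps flip: assms(2))
  also have "\<dots> = 1"
    using assms(3) by (metis abs_mult_self_eq mult.right_neutral)
  finally have "p * (N * p) + d * m * (- N * m) = 1" .
  moreover have "p * (- N * m) + m * (N * p) = 0"
    by (simp add: algebra_simps)
  ultimately show "zsqrt d p m * zsqrt d (N * p) (- N * m) = 1"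
    unfolding zsqrt_mult[OF assms(1)] by simp
qed

lemma qinv_u_eps:
  assumes "d \<ge> 0" "\<psi> \<in> {qI, qJ, qK}" "p\<^sup>2 - d * m\<^sup>2 = N" "\<bar>N\<bar> = 1"
  shows "qinv (u_eps d p m \<psi>) = u_eps d (N * p) (- N * m) \<psi>"
proof -
  have "(of_int p)\<^sup>2 + (of_int m * sqrt_neg d)\<^sup>2 = (of_int N :: complex)"
    using sqrt_neg_mult_self[OF assms(1)]
    by (simp add: power_mult_distrib power2_eq_square[of "sqrt_neg d"] flip: assms(3))
  then have "qnorm (u_eps d p m \<psi>) = of_int N"
    using assms(2) by (auto simp: qnorm_def u_eps_def qadd_def qscale_def one_quat_def qI_def qJ_def qK_def)
  moreover have "inverse (of_int N :: complex) = of_int N"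
    using assms(4) by (auto simp: abs_if split: if_splits)
  ultimately show ?thesis
    using assms(2) by (auto simp: qinv_def qconj_def qscale_def u_eps_def qadd_def one_quat_def
        qI_def qJ_def qK_def)
qed

lemma zsqrt_powi_u_eps_qpowi:
  assumes "\<not> is_square d" "d \<ge> 0" "oQ_unit d (zsqrt d p m)" "\<psi> \<in> {qI, qJ, qK}"
  shows "\<exists>p' m'. zsqrt d p m powi n = zsqrt d p' m' \<and> qpowi (u_eps d p m \<psi>) n = u_eps d p' m' \<psi>"
proof (cases "n \<ge> 0")
  case True
  then show ?thesis
    using zsqrt_power_u_eps_power[OF assms(2,4), of p m "nat n"]
    by (simp add: power_int_def qpowi_def)
next
  case False
  define N where "N = p\<^sup>2 - d * m\<^sup>2"
  have "\<bar>N\<bar> = 1"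
    unfolding N_def using oQ_unit_norm[OF assms(1-3)] .
  with False show ?thesis
    using zsqrt_power_u_eps_power[OF assms(2,4), of "N * p" "- N * m" "nat (- n)"]
      inverse_zsqrt[OF assms(2) N_def[symmetric]] qinv_u_eps[OF assms(2,4) N_def[symmetric]]
    by (simp add: power_int_def qpowi_def)
qed

theorem mainTheorem15:
  fixes d :: int
  assumes "d > 0" and "squarefree d" and "d mod 8 = 7"
  shows "(\<forall>\<xi> \<psi> (p::int) (m::int).
            \<xi> \<in> qbasis \<and> \<psi> \<in> qbasis \<and> \<xi> \<noteq> \<psi> \<and>
            qnorm (qadd (qscale (of_int m * sqrt_neg d) \<xi>) (qscale (of_int p) \<psi>)) = 1 \<and>
            q1 (qadd (qscale (of_int m * sqrt_neg d) \<xi>) (qscale (of_int p) \<psi>)) = 0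
            \<longrightarrow> torsion_unit d (qadd (qscale (of_int m * sqrt_neg d) \<xi>) (qscale (of_int p) \<psi>)))
       \<and> (\<forall>(p::int) (m::int) \<psi> (n::int).
            oQ_unit d (of_int p + of_int m * sqrt (real_of_int d)) \<and> \<psi> \<in> {qI, qJ, qK}
            \<longrightarrow> (\<exists>p' m' :: int.
                   (of_int p + of_int m * sqrt (real_of_int d)) powi n
                     = of_int p' + of_int m' * sqrt (real_of_int d)
                 \<and> qpowi (u_eps d p m \<psi>) n = u_eps d p' m' \<psi>))"
proof -
  have "\<not> is_square d"
    using assms(3) by (intro not_square_if_mod_4_eq_3) presburger
  then show ?thesis
    using torsion_unit_if_pure_norm_1 qbasis_combination_in_HoK
      zsqrt_powi_u_eps_qpowi[of d] assms(1) by auto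
qed

end
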